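(* Assume $F\succeq0$, and for $k\ge1$ let $X_k:=V_kT_k^{-1}V_k^*$ (with $X_0:=0$). Then for every $k\ge1$ there exists $\ell\in\mathbb C^k$ with nonzero last entry such that $X_k-X_{k-1}=V_k\ell\ell^*V_k^*$. Consequently $X_k-X_{k-1}$ has rank at most one (rank exactly one if $V_k$ has full column rank), and $X_k\succeq X_{k-1}$.
   Context: Let $A\in\mathbb C^{n\times n}$, let $C\in\mathbb C^{1\times n}$, and let $F\in\mathbb C^{n\times n}$ be Hermitian; $M^*$ denotes the conjugate transpose, $\succeq0$ denotes Hermitian positive semidefinite, and $X\succeq Y$ means $X-Y\succeq0$. Let $\alpha_1,\alpha_2,\dots\in\mathbb C$ be pairwise distinct with $\operatorname{Re}(\alpha_j)>0$ and $-A^*+\alpha_jI$ nonsingular. Set $$V_k=\big[(-A^*+\alpha_1I)^{-1}C^*,\dots,(-A^*+\alpha_kI)^{-1}C^*\big]\in\mathbb C^{n\times k},$$ and let $T_k\in\mathbb C^{k\times k}$ be the Hermitian matrix with entries $T_k(i,j)=\dfrac{1+(V_k^*FV_k)_{ij}}{\bar\alpha_i+\alpha_j}$, i.e. the unique solution of $\Lambda_k^*T+T\Lambda_k=V_k^*FV_k+\mathbf 1\mathbf 1^*$, where $\Lambda_k=\operatorname{diag}(\alpha_1,\dots,\alpha_k)$ and $\mathbf 1=[1,\dots,1]^T$. Under these assumptions $T_k$ is Hermitian positive definite and $T_{k-1}$ is its leading principal $(k-1)\times(k-1)$ submatrix. *)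

theory Defs
  imports "Jordan_Normal_Form.Schur_Decomposition" "Jordan_Normal_Form.DL_Rank"
    "Jordan_Normal_Form.Gauss_Jordan_Elimination" "HOL-Library.Complex_Order"
begin

definition minv :: "complex mat \<Rightarrow> complex mat" where
  "minv M = the (mat_inverse M)"

definition hermitian_mat :: "nat \<Rightarrow> complex mat \<Rightarrow> bool" where
  "hermitian_mat n M \<longleftrightarrow> M \<in> carrier_mat n n \<and> mat_adjoint M = M"

definition psd_mat :: "nat \<Rightarrow> complex mat \<Rightarrow> bool" where
  "psd_mat n M \<longleftrightarrow> hermitian_mat n M \<and>
     (\<forall>v \<in> carrier_vec n. 0 \<le> conjugate v \<bullet> (M *\<^sub>v v))"

text \<open>V_k: column j (0-based) is (-A^* + alpha_(j+1) I)^(-1) C^*; shifts alpha are indexed from 1.\<close>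
definition Vmat :: "nat \<Rightarrow> complex mat \<Rightarrow> complex mat \<Rightarrow> (nat \<Rightarrow> complex) \<Rightarrow> nat \<Rightarrow> complex mat" where
  "Vmat n A C \<alpha> k = mat_of_cols n
     (map (\<lambda>j. minv (- mat_adjoint A + \<alpha> (Suc j) \<cdot>\<^sub>m 1\<^sub>m n) *\<^sub>v col (mat_adjoint C) 0) [0..<k])"

definition Tmat :: "nat \<Rightarrow> complex mat \<Rightarrow> complex mat \<Rightarrow> complex mat \<Rightarrow> (nat \<Rightarrow> complex) \<Rightarrow> nat \<Rightarrow> complex mat" where
  "Tmat n A C F \<alpha> k = (let V = Vmat n A C \<alpha> k; G = mat_adjoint V * F * V in
     mat k k (\<lambda>(i,j). (1 + G $$ (i,j)) / (cnj (\<alpha> (Suc i)) + \<alpha> (Suc j))))"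

definition Xmat :: "nat \<Rightarrow> complex mat \<Rightarrow> complex mat \<Rightarrow> complex mat \<Rightarrow> (nat \<Rightarrow> complex) \<Rightarrow> nat \<Rightarrow> complex mat" where
  "Xmat n A C F \<alpha> k = (if k = 0 then 0\<^sub>m n n else
     (let V = Vmat n A C \<alpha> k in V * minv (Tmat n A C F \<alpha> k) * mat_adjoint V))"

end

theory Submission
  imports Defs
begin

text \<open>\<open>T\<^sub>k\<close> is the Cauchy-like matrix obtained by dividing the positive semidefinite matrix
  \<open>1 1\<^sup>* + V\<^sub>k\<^sup>* F V\<^sub>k\<close> entrywise by \<open>cnj \<alpha>\<^sub>i + \<alpha>\<^sub>j\<close>. Splitting off one shift at a time with the
  rank-one displacement of the Cauchy kernel shows that such matrices are positive semidefinite,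
  and positive definite thanks to the all-ones part, as long as the shifts are distinct and lie
  in the right half plane. So \<open>T\<^sub>k\<^sub>-\<^sub>1\<close> is invertible, the Schur complement \<open>s\<close> of \<open>T\<^sub>k\<^sub>-\<^sub>1\<close> in
  \<open>T\<^sub>k\<close> is positive, and the bordered inverse
  \<open>T\<^sub>k\<^sup>-\<^sup>1 = diag (T\<^sub>k\<^sub>-\<^sub>1\<^sup>-\<^sup>1, 0) + u u\<^sup>* / s\<close> with \<open>u = (- T\<^sub>k\<^sub>-\<^sub>1\<^sup>-\<^sup>1 b, 1)\<close> gives
  \<open>X\<^sub>k - X\<^sub>k\<^sub>-\<^sub>1 = w w\<^sup>*\<close> for \<open>w = V\<^sub>k u / sqrt s\<close>. If \<open>V\<^sub>k\<close> has full column rank then \<open>w \<noteq> 0\<close>,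
  because the last entry of \<open>u\<close> is \<open>1\<close>.\<close>

section \<open>Cauchy-like Hermitian forms\<close>

definition quad_form :: "nat set \<Rightarrow> (nat \<Rightarrow> nat \<Rightarrow> complex) \<Rightarrow> (nat \<Rightarrow> complex) \<Rightarrow> complex" where
  "quad_form I G v = (\<Sum>i\<in>I. \<Sum>j\<in>I. cnj (v i) * v j * G i j)"

definition cauchy_like :: "(nat \<Rightarrow> complex) \<Rightarrow> (nat \<Rightarrow> nat \<Rightarrow> complex) \<Rightarrow> nat \<Rightarrow> nat \<Rightarrow> complex" where
  "cauchy_like \<beta> G i j = G i j / (cnj (\<beta> i) + \<beta> j)"

lemma cnj_add_nonzero_if_Re_pos: "Re x > 0 \<Longrightarrow> Re y > 0 \<Longrightarrow> cnj x + y \<noteq> 0"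
  by (auto simp: complex_eq_iff)

lemma cnj_mult_self_nonneg: "0 \<le> cnj z * (z :: complex)"
proof -
  have "cnj z * z = complex_of_real ((Re z)\<^sup>2 + (Im z)\<^sup>2)"
    by (simp add: complex_mult_cnj mult.commute)
  then show ?thesis by (simp add: less_eq_complex_def)
qed

lemma quad_form_insert_zero:
  assumes "finite I" "a \<notin> I"
  shows "quad_form (insert a I) G (w(a := 0)) = quad_form I G w"
proof -
  have "quad_form (insert a I) G (w(a := 0)) = quad_form I G (w(a := 0))"
    unfolding quad_form_def using assms by (simp add: sum.insert)
  also have "\<dots> = quad_form I G w"
    unfolding quad_form_def using assms(2) by (intro sum.cong refl) auto
  finally show ?thesis .
qed

lemma quad_form_add_kernel:
  "quad_form I (\<lambda>i j. G i j + H i j) v = quad_form I G v + quad_form I H v"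
  unfolding quad_form_def by (simp add: sum.distrib distrib_left)

lemma quad_form_ones: "quad_form I (\<lambda>_ _. 1) v = cnj (\<Sum>i\<in>I. v i) * (\<Sum>i\<in>I. v i)"
  unfolding quad_form_def by (simp add: sum_distrib_left sum_distrib_right mult.commute)

lemma quad_form_ones_nonneg: "0 \<le> quad_form I (\<lambda>_ _. 1) v"
  unfolding quad_form_ones by (rule cnj_mult_self_nonneg)

lemma cauchy_like_add:
  "cauchy_like \<beta> (\<lambda>i j. G i j + H i j) = (\<lambda>i j. cauchy_like \<beta> G i j + cauchy_like \<beta> H i j)"
  unfolding cauchy_like_def by (simp add: add_divide_distrib)

text \<open>The rank-one displacement of the Cauchy kernel \<open>1 / (x + y)\<close> at a node \<open>c\<close>;
  with \<open>x = cnj (\<beta> i)\<close> and \<open>y = \<beta> j\<close> the second summand vanishes when \<open>\<beta> j = c\<close>.\<close>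
lemma cauchy_kernel_displacement:
  fixes x y c :: complex
  assumes "x + c \<noteq> 0" "cnj c + y \<noteq> 0" "x + y \<noteq> 0"
  shows "1 / (x + y) = (c + cnj c) / ((x + c) * (cnj c + y))
           + (x - cnj c) * (y - c) / ((x + c) * (cnj c + y) * (x + y))"
proof -
  have "(x + c) * (cnj c + y) = (c + cnj c) * (x + y) + (x - cnj c) * (y - c)"
    by (simp add: algebra_simps)
  then have "(c + cnj c) / ((x + c) * (cnj c + y)) + (x - cnj c) * (y - c) / ((x + c) * (cnj c + y) * (x + y))
      = ((x + c) * (cnj c + y)) / ((x + c) * (cnj c + y) * (x + y))"
    using assms by (simp add: add_divide_distrib)
  also have "\<dots> = 1 / (x + y)" using assms by simp
  finally show ?thesis by simp
qed

lemma quad_form_cauchy_like_insert: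
  assumes fin: "finite I" and aI: "a \<notin> I"
    and re: "\<forall>i\<in>insert a I. Re (\<beta> i) > 0"
  shows "quad_form (insert a I) (cauchy_like \<beta> G) v =
     (\<beta> a + cnj (\<beta> a)) * quad_form (insert a I) G (\<lambda>i. v i / (cnj (\<beta> a) + \<beta> i))
     + quad_form I (cauchy_like \<beta> G) (\<lambda>i. v i * (\<beta> i - \<beta> a) / (cnj (\<beta> a) + \<beta> i))"
proof -
  let ?c = "\<beta> a"
  let ?w = "\<lambda>i. v i / (cnj ?c + \<beta> i)"
  let ?w' = "\<lambda>i. v i * (\<beta> i - ?c) / (cnj ?c + \<beta> i)"
  have summand: "cnj (v i) * v j * cauchy_like \<beta> G i j =
      (?c + cnj ?c) * (cnj (?w i) * ?w j * G i j) + cnj (?w' i) * ?w' j * cauchy_like \<beta> G i j"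
    if "i \<in> insert a I" "j \<in> insert a I" for i j
  proof -
    have "Re ?c > 0" "Re (\<beta> i) > 0" "Re (\<beta> j) > 0" using re that by auto
    then have n1: "cnj (\<beta> i) + ?c \<noteq> 0" and n2: "cnj ?c + \<beta> j \<noteq> 0"
      and n3: "cnj (\<beta> i) + \<beta> j \<noteq> 0" and n4: "cnj ?c + \<beta> i \<noteq> 0"
      by (simp_all add: cnj_add_nonzero_if_Re_pos)
    have split: "1 / (cnj (\<beta> i) + \<beta> j) = (?c + cnj ?c) / ((cnj (\<beta> i) + ?c) * (cnj ?c + \<beta> j))
        + (cnj (\<beta> i) - cnj ?c) * (\<beta> j - ?c) / ((cnj (\<beta> i) + ?c) * (cnj ?c + \<beta> j) * (cnj (\<beta> i) + \<beta> j))"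
      using n1 n2 n3 by (rule cauchy_kernel_displacement)
    have cnj_w: "cnj (?w i) = cnj (v i) / (cnj (\<beta> i) + ?c)"
      and cnj_w': "cnj (?w' i) = cnj (v i) * (cnj (\<beta> i) - cnj ?c) / (cnj (\<beta> i) + ?c)"
      by (simp_all add: add.commute)
    have "cnj (v i) * v j * G i j * (1 / (cnj (\<beta> i) + \<beta> j)) =
        (?c + cnj ?c) * (cnj (?w i) * ?w j * G i j) + cnj (?w' i) * ?w' j * cauchy_like \<beta> G i j"
      unfolding split cnj_w cnj_w' cauchy_like_def using n1 n2 n3 n4 by (simp add: field_simps)
    then show ?thesis by (simp add: cauchy_like_def)
  qed
  have "quad_form (insert a I) (cauchy_like \<beta> G) v =
      (\<Sum>i\<in>insert a I. \<Sum>j\<in>insert a I. (?c + cnj ?c) * (cnj (?w i) * ?w j * G i j)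
        + cnj (?w' i) * ?w' j * cauchy_like \<beta> G i j)"
    unfolding quad_form_def by (intro sum.cong refl) (simp add: summand)
  also have "\<dots> = (?c + cnj ?c) * quad_form (insert a I) G ?w + quad_form (insert a I) (cauchy_like \<beta> G) ?w'"
    unfolding quad_form_def by (simp add: sum.distrib sum_distrib_left)
  also have "quad_form (insert a I) (cauchy_like \<beta> G) ?w' = quad_form I (cauchy_like \<beta> G) ?w'"
    unfolding quad_form_def using fin aI by (simp add: sum.insert)
  finally show ?thesis .
qed

lemma quad_form_cauchy_like_nonneg:
  assumes "finite I" "\<forall>i\<in>I. Re (\<beta> i) > 0" "\<forall>w. 0 \<le> quad_form I G w"
  shows "0 \<le> quad_form I (cauchy_like \<beta> G) v"
  using assms
proof (induction I arbitrary: v rule: finite_induct)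
  case empty
  then show ?case by (simp add: quad_form_def)
next
  case (insert a I)
  have "0 \<le> quad_form I G w" for w
    using insert.prems(2) quad_form_insert_zero[OF insert.hyps, of G w] by metis
  then have IH: "0 \<le> quad_form I (cauchy_like \<beta> G) w" for w
    using insert.IH insert.prems by auto
  have "0 \<le> \<beta> a + cnj (\<beta> a)"
    using insert.prems(1) by (simp add: less_eq_complex_def)
  then show ?case
    unfolding quad_form_cauchy_like_insert[OF insert.hyps insert.prems(1)]
    by (rule add_nonneg_nonneg[OF mult_nonneg_nonneg[OF _ insert.prems(2)[rule_format]] IH])
qed

lemma quad_form_cauchy_like_ones_eq_0:
  assumes "finite I" "inj_on \<beta> I" "\<forall>i\<in>I. Re (\<beta> i) > 0"
    and "quad_form I (cauchy_like \<beta> (\<lambda>_ _. 1)) v = 0"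
  shows "\<forall>i\<in>I. v i = 0"
  using assms
proof (induction I arbitrary: v rule: finite_induct)
  case empty
  then show ?case by simp
next
  case (insert a I)
  let ?c = "\<beta> a"
  let ?w = "\<lambda>i. v i / (cnj ?c + \<beta> i)"
  let ?w' = "\<lambda>i. v i * (\<beta> i - ?c) / (cnj ?c + \<beta> i)"
  have re: "\<forall>i\<in>insert a I. Re (\<beta> i) > 0" by (fact insert.prems(2))
  have c: "0 < Re ?c" using re by simp
  have nonneg_I: "0 \<le> quad_form I (cauchy_like \<beta> (\<lambda>_ _. 1)) ?w'"
    using insert.hyps(1) insert.prems(2)
    by (intro quad_form_cauchy_like_nonneg) (auto simp: quad_form_ones_nonneg)
  have nonneg_a: "0 \<le> (?c + cnj ?c) * quad_form (insert a I) (\<lambda>_ _. 1) ?w"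
    using c by (intro mult_nonneg_nonneg[OF _ quad_form_ones_nonneg]) (simp add: less_eq_complex_def)
  have "(?c + cnj ?c) * quad_form (insert a I) (\<lambda>_ _. 1) ?w + quad_form I (cauchy_like \<beta> (\<lambda>_ _. 1)) ?w' = 0"
    using insert.prems(3) unfolding quad_form_cauchy_like_insert[OF insert.hyps re] .
  then have part_a: "(?c + cnj ?c) * quad_form (insert a I) (\<lambda>_ _. 1) ?w = 0"
    and part_I: "quad_form I (cauchy_like \<beta> (\<lambda>_ _. 1)) ?w' = 0"
    using nonneg_I nonneg_a by (simp_all add: add_nonneg_eq_0_iff)
  have vI: "\<forall>i\<in>I. v i = 0"
  proof
    fix i assume i: "i \<in> I"
    have "?w' i = 0" using insert.IH[of ?w'] insert.prems part_I i by auto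
    moreover have "\<beta> i \<noteq> ?c" using insert.prems(1) i insert.hyps(2) by (auto simp: inj_on_def)
    moreover have "cnj ?c + \<beta> i \<noteq> 0" using re i by (simp add: cnj_add_nonzero_if_Re_pos)
    ultimately show "v i = 0" by simp
  qed
  have "?c + cnj ?c \<noteq> 0" using c by (simp add: complex_eq_iff)
  then have "(\<Sum>i\<in>insert a I. ?w i) = 0" using part_a by (simp add: quad_form_ones del: cnj_sum)
  then have "?w a = 0" using vI insert.hyps by (simp add: sum.insert)
  moreover have "cnj ?c + ?c \<noteq> 0" using c by (simp add: cnj_add_nonzero_if_Re_pos)
  ultimately show ?case using vI by simp
qed

definition gram_kernel :: "nat \<Rightarrow> complex mat \<Rightarrow> (nat \<Rightarrow> complex vec) \<Rightarrow> nat \<Rightarrow> nat \<Rightarrow> complex" where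
  "gram_kernel n F c i j = (\<Sum>p<n. \<Sum>q<n. cnj (c i $ p) * F $$ (p, q) * c j $ q)"

lemma gram_kernel_hermitian:
  assumes "hermitian_mat n F"
  shows "gram_kernel n F c j i = cnj (gram_kernel n F c i j)"
proof -
  have F: "F \<in> carrier_mat n n" and adj: "mat_adjoint F = F"
    using assms by (auto simp: hermitian_mat_def)
  have F_sym: "F $$ (q, p) = cnj (F $$ (p, q))" if "p < n" "q < n" for p q
    using arg_cong[OF adj, of "\<lambda>M. M $$ (q, p)"] F that
    by (simp add: mat_adjoint_def mat_of_rows_index)
  have "gram_kernel n F c j i = (\<Sum>q<n. \<Sum>p<n. cnj (c j $ q) * F $$ (q, p) * c i $ p)"
    by (simp add: gram_kernel_def)
  also have "\<dots> = (\<Sum>p<n. \<Sum>q<n. cnj (c j $ q) * F $$ (q, p) * c i $ p)"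
    by (rule sum.swap)
  also have "\<dots> = cnj (gram_kernel n F c i j)"
    unfolding gram_kernel_def cnj_sum
  proof (intro sum.cong refl)
    fix p q assume "p \<in> {..<n}" "q \<in> {..<n}"
    then show "cnj (c j $ q) * F $$ (q, p) * c i $ p = cnj (cnj (c i $ p) * F $$ (p, q) * c j $ q)"
      by (simp add: F_sym[of p q] mult_ac)
  qed
  finally show ?thesis .
qed

lemma quad_form_gram_kernel_nonneg:
  assumes "psd_mat n F"
  shows "0 \<le> quad_form I (gram_kernel n F c) w"
proof -
  define x where "x = vec n (\<lambda>q. \<Sum>j\<in>I. w j * c j $ q)"
  let ?f = "\<lambda>p q i j. cnj (w i) * w j * (cnj (c i $ p) * F $$ (p, q) * c j $ q)"
  have F: "F \<in> carrier_mat n n" using assms by (simp add: psd_mat_def hermitian_mat_def)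
  have "0 \<le> conjugate x \<bullet> (F *\<^sub>v x)"
    using assms unfolding psd_mat_def x_def by simp
  also have "conjugate x \<bullet> (F *\<^sub>v x) = (\<Sum>p<n. \<Sum>q<n. cnj (x $ p) * F $$ (p, q) * x $ q)"
    using F by (simp add: x_def scalar_prod_def atLeast0LessThan sum_distrib_left mult.assoc)
  also have "\<dots> = (\<Sum>p<n. \<Sum>q<n. \<Sum>i\<in>I. \<Sum>j\<in>I. ?f p q i j)"
    unfolding x_def by (simp add: sum_distrib_left sum_distrib_right cnj_sum mult_ac)
  also have "\<dots> = (\<Sum>p<n. \<Sum>i\<in>I. \<Sum>q<n. \<Sum>j\<in>I. ?f p q i j)"
    by (rule sum.cong[OF refl], rule sum.swap)
  also have "\<dots> = (\<Sum>i\<in>I. \<Sum>p<n. \<Sum>j\<in>I. \<Sum>q<n. ?f p q i j)"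
    by (subst sum.swap) (rule sum.cong[OF refl], rule sum.cong[OF refl], rule sum.swap)
  also have "\<dots> = (\<Sum>i\<in>I. \<Sum>j\<in>I. \<Sum>p<n. \<Sum>q<n. ?f p q i j)"
    by (rule sum.cong[OF refl], rule sum.swap)
  also have "\<dots> = quad_form I (gram_kernel n F c) w"
    unfolding quad_form_def gram_kernel_def sum_distrib_left ..
  finally show ?thesis .
qed

lemma mat_adjoint_dims [simp]:
  "dim_row (mat_adjoint M) = dim_col M" "dim_col (mat_adjoint M) = dim_row M"
  unfolding mat_adjoint_def by auto

lemma index_mat_adjoint [simp]:
  "i < dim_col M \<Longrightarrow> j < dim_row M \<Longrightarrow> mat_adjoint M $$ (i, j) = cnj (M $$ (j, i))"
  unfolding mat_adjoint_def by (auto simp: mat_of_rows_index)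

lemma index_mat_of_cols_upt [simp]:
  "p < n \<Longrightarrow> i < k \<Longrightarrow> mat_of_cols n (map c [0..<k]) $$ (p, i) = c i $ p"
  by (simp add: mat_of_cols_index)

lemma index_mult_mat_sum:
  assumes "M \<in> carrier_mat a b" "N \<in> carrier_mat b d" "i < a" "j < d"
  shows "(M * N) $$ (i, j) = (\<Sum>l<b. M $$ (i, l) * N $$ (l, j))"
  using assms by (simp add: scalar_prod_def atLeast0LessThan)

lemma index_mult_mat_vec_sum:
  assumes "A \<in> carrier_mat n k" "v \<in> carrier_vec k" "r < n"
  shows "(A *\<^sub>v v) $ r = (\<Sum>i<k. A $$ (r, i) * v $ i)"
  using assms by (simp add: scalar_prod_def atLeast0LessThan)

lemma index_sandwich_adjoint:
  assumes V: "V \<in> carrier_mat n k" and M: "M \<in> carrier_mat k k" and "p < n" "q < n"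
  shows "(V * M * mat_adjoint V) $$ (p, q) = (\<Sum>j<k. \<Sum>i<k. V $$ (p, i) * M $$ (i, j) * cnj (V $$ (q, j)))"
proof -
  have "(V * M * mat_adjoint V) $$ (p, q) = (\<Sum>j<k. (V * M) $$ (p, j) * mat_adjoint V $$ (j, q))"
    using assms by (intro index_mult_mat_sum) auto
  also have "\<dots> = (\<Sum>j<k. (\<Sum>i<k. V $$ (p, i) * M $$ (i, j)) * cnj (V $$ (q, j)))"
    using assms by (intro sum.cong refl) (simp add: scalar_prod_def atLeast0LessThan)
  finally show ?thesis by (simp add: sum_distrib_right)
qed

lemma index_adjoint_gram_kernel:
  assumes F: "F \<in> carrier_mat n n" and "i < k" "j < k"
  shows "(mat_adjoint (mat_of_cols n (map c [0..<k])) * F * mat_of_cols n (map c [0..<k])) $$ (i, j)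
    = gram_kernel n F c i j"
proof -
  let ?V = "mat_of_cols n (map c [0..<k])"
  have V: "?V \<in> carrier_mat n k" by auto
  have "(mat_adjoint ?V * F * ?V) $$ (i, j) = (\<Sum>q<n. (mat_adjoint ?V * F) $$ (i, q) * ?V $$ (q, j))"
    using assms V by (intro index_mult_mat_sum) auto
  also have "\<dots> = (\<Sum>q<n. (\<Sum>p<n. cnj (c i $ p) * F $$ (p, q)) * c j $ q)"
    using assms V by (intro sum.cong refl) (simp add: scalar_prod_def atLeast0LessThan)
  also have "\<dots> = (\<Sum>q<n. \<Sum>p<n. cnj (c i $ p) * F $$ (p, q) * c j $ q)"
    by (simp add: sum_distrib_right)
  also have "\<dots> = gram_kernel n F c i j"
    unfolding gram_kernel_def by (rule sum.swap)
  finally show ?thesis .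
qed

lemma minv_inverse:
  assumes M: "M \<in> carrier_mat n n" and "det M \<noteq> 0"
  shows "M * minv M = 1\<^sub>m n" "minv M * M = 1\<^sub>m n" "minv M \<in> carrier_mat n n"
proof -
  have "M \<in> Units (ring_mat TYPE(complex) n ())" by (rule det_non_zero_imp_unit[OF assms])
  then obtain B where B: "mat_inverse M = Some B"
    using mat_inverse(1)[OF M, where b = "()"] by (cases "mat_inverse M") auto
  then have "minv M = B" unfolding minv_def by simp
  with mat_inverse(2)[OF M B] show "M * minv M = 1\<^sub>m n" "minv M * M = 1\<^sub>m n" "minv M \<in> carrier_mat n n"
    by simp_all
qed

definition outer_mat :: "complex vec \<Rightarrow> complex mat" where
  "outer_mat w = mat (dim_vec w) (dim_vec w) (\<lambda>(p, q). w $ p * cnj (w $ q))"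

lemma dim_outer_mat [simp]: "dim_row (outer_mat w) = dim_vec w" "dim_col (outer_mat w) = dim_vec w"
  by (simp_all add: outer_mat_def)

lemma outer_mat_carrier [simp]: "w \<in> carrier_vec n \<Longrightarrow> outer_mat w \<in> carrier_mat n n"
  by (simp add: outer_mat_def)

lemma index_outer_mat [simp]:
  "p < dim_vec w \<Longrightarrow> q < dim_vec w \<Longrightarrow> outer_mat w $$ (p, q) = w $ p * cnj (w $ q)"
  by (simp add: outer_mat_def)

lemma psd_outer_mat:
  assumes w: "w \<in> carrier_vec n"
  shows "psd_mat n (outer_mat w)"
  unfolding psd_mat_def hermitian_mat_def
proof (intro conjI ballI)
  show "outer_mat w \<in> carrier_mat n n" using w by simp
  show "mat_adjoint (outer_mat w) = outer_mat w"
    using w by (intro eq_matI) (simp_all add: outer_mat_def)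
  fix x :: "complex vec" assume x: "x \<in> carrier_vec n"
  have "conjugate x \<bullet> (outer_mat w *\<^sub>v x)
      = (\<Sum>p<n. cnj (x $ p) * w $ p) * cnj (\<Sum>q<n. cnj (x $ q) * w $ q)"
    using w x by (simp add: outer_mat_def scalar_prod_def atLeast0LessThan sum_distrib_left
        sum_distrib_right cnj_sum mult_ac) (rule sum.swap)
  then show "0 \<le> conjugate x \<bullet> (outer_mat w *\<^sub>v x)"
    using cnj_mult_self_nonneg[of "\<Sum>q<n. cnj (x $ q) * w $ q"] by (simp add: mult.commute)
qed

lemma (in vec_space) rank_pos_if_nonzero_col:
  assumes A: "A \<in> carrier_mat n nc" and c: "c < nc" and nz: "col A c \<noteq> 0\<^sub>v n"
  shows "rank A \<ge> 1"
proof -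
  have "lin_indpt {}"
    by (metis empty_subsetI fin_dim finite_basis_exists subset_li_is_li vec_vs vectorspace.basis_def)
  moreover have "col A c \<notin> span {}" using nz span_empty by simp
  ultimately have "lin_indpt {col A c}"
    using lin_dep_iff_in_span[of "{}" "col A c"] A c by simp
  moreover have "col A c \<in> set (cols A)" using A c by (simp add: cols_def)
  ultimately show ?thesis using rank_ge_card_indpt[OF A, of "{col A c}"] by simp
qed

lemma (in vec_space) rank_le_card_set_cols:
  assumes "A \<in> carrier_mat n nc"
  shows "rank A \<le> card (set (cols A))"
proof -
  obtain S where S: "maximal S (\<lambda>T. T \<subseteq> set (cols A) \<and> lin_indpt T)"
    using maximal_exists[of "\<lambda>T. T \<subseteq> set (cols A) \<and> lin_indpt T" "card (set (cols A))" "{}"]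
    by (meson List.finite_set card_mono empty_iff empty_subsetI finite_lin_indpt2 rev_finite_subset)
  then show ?thesis
    using rank_card_indpt[OF assms S] by (simp add: card_mono maximal_def)
qed

lemma (in vec_space) full_rank_mult_vec_eq_0:
  assumes A: "A \<in> carrier_mat n nc" and rank: "rank A = nc"
    and v: "v \<in> carrier_vec nc" and Av: "A *\<^sub>v v = 0\<^sub>v n"
  shows "v = 0\<^sub>v nc"
proof (rule ccontr)
  assume v0: "v \<noteq> 0\<^sub>v nc"
  show False
  proof (cases "distinct (cols A)")
    case True
    then show False
      using full_rank_lin_indpt[OF A rank True] lin_depI[OF A v v0 Av True] by simp
  next
    case False
    then have "card (set (cols A)) \<noteq> length (cols A)" using card_distinct by blast
    then have "card (set (cols A)) < nc"
      using A card_length[of "cols A"] by simp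
    then show False using rank_le_card_set_cols[OF A] rank by simp
  qed
qed

lemma rank_outer_mat_le_1:
  assumes "w \<in> carrier_vec n"
  shows "vec_space.rank n (outer_mat w) \<le> 1"
  using assms by (intro vec_space.rank_le_1_product_entries[of _ n n, where f = "\<lambda>p. w $ p" and g = "\<lambda>q. cnj (w $ q)"]) auto

lemma rank_outer_mat:
  assumes w: "w \<in> carrier_vec n" and "w \<noteq> 0\<^sub>v n"
  shows "vec_space.rank n (outer_mat w) = 1"
proof -
  obtain q where q: "q < n" "w $ q \<noteq> 0" using assms by (metis carrier_vecD eq_vecI index_zero_vec)
  then have "col (outer_mat w) q $ q \<noteq> 0" using w by (simp add: carrier_vecD)
  then have "col (outer_mat w) q \<noteq> 0\<^sub>v n" using q by auto
  then have "vec_space.rank n (outer_mat w) \<ge> 1"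
    using w q by (intro vec_space.rank_pos_if_nonzero_col[of _ n n]) simp_all
  then show ?thesis using rank_outer_mat_le_1[OF w] by simp
qed

lemma sandwich_outer_mat:
  assumes V: "V \<in> carrier_mat n k" and l: "l \<in> carrier_vec k"
  shows "V * (mat_of_cols k [l] * mat_adjoint (mat_of_cols k [l])) * mat_adjoint V = outer_mat (V *\<^sub>v l)"
proof (rule eq_matI)
  let ?L = "mat_of_cols k [l]"
  have LL: "?L * mat_adjoint ?L \<in> carrier_mat k k" by (intro carrier_matI) auto
  have LL_index: "(?L * mat_adjoint ?L) $$ (i, j) = l $ i * cnj (l $ j)" if "i < k" "j < k" for i j
    using l that by (simp add: mat_of_cols_index scalar_prod_def)
  fix p q assume "p < dim_row (outer_mat (V *\<^sub>v l))" "q < dim_col (outer_mat (V *\<^sub>v l))"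
  then have p: "p < n" and q: "q < n" using V by (auto simp: outer_mat_def)
  have "(V * (?L * mat_adjoint ?L) * mat_adjoint V) $$ (p, q)
      = (\<Sum>j<k. \<Sum>i<k. V $$ (p, i) * (l $ i * cnj (l $ j)) * cnj (V $$ (q, j)))"
    unfolding index_sandwich_adjoint[OF V LL p q] using l
    by (intro sum.cong refl) (simp add: LL_index del: index_mult_mat)
  also have "\<dots> = (V *\<^sub>v l) $ p * cnj ((V *\<^sub>v l) $ q)"
    unfolding index_mult_mat_vec_sum[OF V l p] index_mult_mat_vec_sum[OF V l q] cnj_sum sum_product
    by (subst sum.swap) (simp add: mult_ac)
  finally show "(V * (?L * mat_adjoint ?L) * mat_adjoint V) $$ (p, q) = outer_mat (V *\<^sub>v l) $$ (p, q)"
    using V p q by simp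
qed (use V in \<open>auto simp: outer_mat_def\<close>)

section \<open>Bordered inverses of positive definite Gram matrices\<close>

locale pd_kernel =
  fixes t :: "nat \<Rightarrow> nat \<Rightarrow> complex"
  assumes hermitian: "t j i = cnj (t i j)"
    and nonneg: "0 \<le> quad_form {0..<m} t w"
    and definite: "quad_form {0..<m} t w = 0 \<Longrightarrow> i < m \<Longrightarrow> w i = 0"

lemma pd_kernel_cauchy_like:
  assumes inj: "inj \<beta>" and re: "\<And>i. Re (\<beta> i) > 0"
    and G_hermitian: "\<And>i j. G j i = cnj (G i j)"
    and G_nonneg: "\<And>m w. 0 \<le> quad_form {0..<m} G w"
  shows "pd_kernel (cauchy_like \<beta> (\<lambda>i j. 1 + G i j))"
proof
  have inj_on: "inj_on \<beta> {0..<m}" for m using inj by (rule inj_on_subset) simp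
  show "cauchy_like \<beta> (\<lambda>i j. 1 + G i j) j i = cnj (cauchy_like \<beta> (\<lambda>i j. 1 + G i j) i j)" for i j
    by (simp add: cauchy_like_def G_hermitian[of j i] add.commute)
  have ones: "0 \<le> quad_form {0..<m} (cauchy_like \<beta> (\<lambda>_ _. 1)) w" for m w
    using re by (intro quad_form_cauchy_like_nonneg) (simp_all add: quad_form_ones_nonneg)
  have G: "0 \<le> quad_form {0..<m} (cauchy_like \<beta> G) w" for m w
    using re G_nonneg by (intro quad_form_cauchy_like_nonneg) simp_all
  show "0 \<le> quad_form {0..<m} (cauchy_like \<beta> (\<lambda>i j. 1 + G i j)) w" for m w
    unfolding cauchy_like_add quad_form_add_kernel using ones G by (rule add_nonneg_nonneg)
  show "w i = 0" if "quad_form {0..<m} (cauchy_like \<beta> (\<lambda>i j. 1 + G i j)) w = 0" "i < m" for m w i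
  proof -
    have "quad_form {0..<m} (cauchy_like \<beta> (\<lambda>_ _. 1)) w = 0"
      using that(1) ones[of m w] G[of m w]
      unfolding cauchy_like_add quad_form_add_kernel by (simp add: add_nonneg_eq_0_iff)
    then show ?thesis
      using quad_form_cauchy_like_ones_eq_0[OF _ inj_on] re that(2) by simp
  qed
qed

context pd_kernel
begin

definition gram :: "nat \<Rightarrow> complex mat" where
  "gram m = mat m m (\<lambda>(i, j). t i j)"

abbreviation gram_inv :: "nat \<Rightarrow> complex mat" where
  "gram_inv m \<equiv> minv (gram m)"

lemma gram_carrier [simp]: "gram m \<in> carrier_mat m m"
  by (simp add: gram_def)

lemma dim_gram [simp]: "dim_row (gram m) = m" "dim_col (gram m) = m"
  by (simp_all add: gram_def)

lemma index_gram [simp]: "i < m \<Longrightarrow> j < m \<Longrightarrow> gram m $$ (i, j) = t i j"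
  by (simp add: gram_def)

lemma quad_form_gram:
  assumes "v \<in> carrier_vec m"
  shows "conjugate v \<bullet> (gram m *\<^sub>v v) = quad_form {0..<m} t (\<lambda>i. v $ i)"
  using assms unfolding quad_form_def gram_def
  by (simp add: scalar_prod_def sum_distrib_left mult_ac)

lemma det_gram_nonzero: "det (gram m) \<noteq> 0"
proof
  assume "det (gram m) = 0"
  then obtain v where v: "v \<in> carrier_vec m" "v \<noteq> 0\<^sub>v m" "gram m *\<^sub>v v = 0\<^sub>v m"
    using det_0_iff_vec_prod_zero_field[OF gram_carrier] by blast
  then have "quad_form {0..<m} t (\<lambda>i. v $ i) = 0"
    using quad_form_gram[OF v(1)] by simp
  then have "v $ i = 0" if "i < m" for i
    using that by (rule definite)
  then have "v = 0\<^sub>v m" using v(1) by (intro eq_vecI) auto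
  with v(2) show False ..
qed

lemmas gram_mult_gram_inv = minv_inverse(1)[OF gram_carrier det_gram_nonzero]
  and gram_inv_mult_gram = minv_inverse(2)[OF gram_carrier det_gram_nonzero]
  and gram_inv_carrier = minv_inverse(3)[OF gram_carrier det_gram_nonzero]

lemma sum_gram_gram_inv:
  assumes "i < m" "j < m"
  shows "(\<Sum>l<m. t i l * gram_inv m $$ (l, j)) = of_bool (i = j)"
proof -
  have "(\<Sum>l<m. t i l * gram_inv m $$ (l, j)) = (gram m * gram_inv m) $$ (i, j)"
    using assms by (simp add: index_mult_mat_sum[OF gram_carrier gram_inv_carrier])
  also have "\<dots> = of_bool (i = j)" using assms by (simp add: gram_mult_gram_inv)
  finally show ?thesis .
qed

lemma gram_inv_hermitian:
  assumes "i < m" "j < m"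
  shows "gram_inv m $$ (i, j) = cnj (gram_inv m $$ (j, i))"
proof -
  have dims: "dim_row (gram_inv m) = m" "dim_col (gram_inv m) = m"
    using gram_inv_carrier[of m] by auto
  then have adj: "mat_adjoint (gram_inv m) \<in> carrier_mat m m"
    by (intro carrier_matI) simp_all
  have left_inverse: "mat_adjoint (gram_inv m) * gram m = 1\<^sub>m m"
  proof (rule eq_matI)
    fix i j assume "i < dim_row (1\<^sub>m m :: complex mat)" "j < dim_col (1\<^sub>m m :: complex mat)"
    then have i: "i < m" and j: "j < m" by auto
    have "(mat_adjoint (gram_inv m) * gram m) $$ (i, j) = (\<Sum>l<m. cnj (gram_inv m $$ (l, i)) * t l j)"
      unfolding index_mult_mat_sum[OF adj gram_carrier i j] using i j dims by simp
    also have "\<dots> = cnj (\<Sum>l<m. t j l * gram_inv m $$ (l, i))"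
      unfolding cnj_sum by (intro sum.cong refl) (simp add: hermitian[of j])
    also have "\<dots> = 1\<^sub>m m $$ (i, j)"
      using i j sum_gram_gram_inv[OF j i] by auto
    finally show "(mat_adjoint (gram_inv m) * gram m) $$ (i, j) = 1\<^sub>m m $$ (i, j)" .
  qed (use adj in auto)
  have "mat_adjoint (gram_inv m) = mat_adjoint (gram_inv m) * (gram m * gram_inv m)"
    by (simp add: gram_mult_gram_inv right_mult_one_mat[OF adj])
  also have "\<dots> = gram_inv m"
    by (simp add: assoc_mult_mat[symmetric, OF adj gram_carrier gram_inv_carrier] left_inverse
        left_mult_one_mat[OF gram_inv_carrier])
  finally have "mat_adjoint (gram_inv m) $$ (i, j) = gram_inv m $$ (i, j)" by simp
  then show ?thesis using assms dims by simp
qed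

text \<open>\<open>border m\<close> is the vector \<open>(- T\<^sub>m\<^sup>-\<^sup>1 b, 1)\<close>, where \<open>b\<close> is the last column of
  \<open>T\<^sub>m\<^sub>+\<^sub>1 = gram (Suc m)\<close> above the diagonal; it spans the kernel of the first \<open>m\<close> rows of
  \<open>T\<^sub>m\<^sub>+\<^sub>1\<close>, and \<open>schur m = t m m - b\<^sup>* T\<^sub>m\<^sup>-\<^sup>1 b\<close> is the Schur complement of \<open>T\<^sub>m\<close>.\<close>
definition border :: "nat \<Rightarrow> nat \<Rightarrow> complex" where
  "border m i = (if i < m then - (\<Sum>l<m. gram_inv m $$ (i, l) * t l m) else 1)"

definition schur :: "nat \<Rightarrow> complex" where
  "schur m = (\<Sum>l<Suc m. t m l * border m l)"

lemma sum_gram_border: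
  assumes i: "i < m"
  shows "(\<Sum>l<Suc m. t i l * border m l) = 0"
proof -
  have "(\<Sum>l<m. t i l * (\<Sum>r<m. gram_inv m $$ (l, r) * t r m))
      = (\<Sum>l<m. \<Sum>r<m. t i l * gram_inv m $$ (l, r) * t r m)"
    by (simp add: sum_distrib_left mult.assoc)
  also have "\<dots> = (\<Sum>r<m. \<Sum>l<m. t i l * gram_inv m $$ (l, r) * t r m)"
    by (rule sum.swap)
  also have "\<dots> = (\<Sum>r<m. (\<Sum>l<m. t i l * gram_inv m $$ (l, r)) * t r m)"
    by (simp add: sum_distrib_right)
  also have "\<dots> = (\<Sum>r<m. of_bool (i = r) * t r m)"
    using i by (intro sum.cong refl) (simp add: sum_gram_gram_inv)
  also have "\<dots> = t i m" using i by simp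
  finally show ?thesis by (simp add: border_def sum_negf)
qed

lemma quad_form_border: "quad_form {0..<Suc m} t (border m) = schur m"
proof -
  have "quad_form {0..<Suc m} t (border m)
      = (\<Sum>i<Suc m. cnj (border m i) * (\<Sum>j<Suc m. t i j * border m j))"
    unfolding quad_form_def atLeast0LessThan sum_distrib_left by (intro sum.cong refl) (simp add: ac_simps)
  also have "\<dots> = (\<Sum>i<m. cnj (border m i) * (\<Sum>j<Suc m. t i j * border m j))
      + cnj (border m m) * (\<Sum>j<Suc m. t m j * border m j)"
    by (rule sum.lessThan_Suc)
  also have "(\<Sum>i<m. cnj (border m i) * (\<Sum>j<Suc m. t i j * border m j)) = 0"
    by (intro sum.neutral) (simp add: sum_gram_border del: sum.lessThan_Suc)
  moreover have "border m m = 1" by (simp add: border_def)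
  ultimately show ?thesis by (simp add: schur_def)
qed

lemma schur_pos: "0 < schur m"
proof -
  have "0 \<le> schur m" using nonneg[of "Suc m" "border m"] by (simp add: quad_form_border)
  moreover have "schur m \<noteq> 0"
  proof
    assume "schur m = 0"
    then have "border m m = 0"
      using definite[of "Suc m" "border m" m] by (simp add: quad_form_border)
    then show False by (simp add: border_def)
  qed
  ultimately show ?thesis by (simp add: order_less_le)
qed

lemma cnj_border:
  assumes j: "j < m"
  shows "cnj (border m j) = - (\<Sum>l<m. t m l * gram_inv m $$ (l, j))"
proof -
  have "(\<Sum>l<m. cnj (gram_inv m $$ (j, l) * t l m)) = (\<Sum>l<m. t m l * gram_inv m $$ (l, j))"
  proof (intro sum.cong refl)
    fix l assume "l \<in> {..<m}"
    then show "cnj (gram_inv m $$ (j, l) * t l m) = t m l * gram_inv m $$ (l, j)"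
      using gram_inv_hermitian[OF _ j, of l] hermitian[of m l] by simp
  qed
  then show ?thesis
    using j unfolding border_def by (simp add: cnj_sum)
qed

definition bordered_inverse :: "nat \<Rightarrow> complex mat" where
  "bordered_inverse m = mat (Suc m) (Suc m) (\<lambda>(i, j).
     (if i < m \<and> j < m then gram_inv m $$ (i, j) else 0) + border m i * cnj (border m j) / schur m)"

lemma bordered_inverse_carrier [simp]: "bordered_inverse m \<in> carrier_mat (Suc m) (Suc m)"
  by (simp add: bordered_inverse_def)

lemma gram_mult_bordered_inverse: "gram (Suc m) * bordered_inverse m = 1\<^sub>m (Suc m)"
proof (rule eq_matI)
  fix i j assume "i < dim_row (1\<^sub>m (Suc m) :: complex mat)" "j < dim_col (1\<^sub>m (Suc m) :: complex mat)"
  then have i: "i < Suc m" and j: "j < Suc m" by auto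
  have s: "schur m \<noteq> 0" using schur_pos[of m] by auto
  have "(gram (Suc m) * bordered_inverse m) $$ (i, j)
      = (\<Sum>l<Suc m. t i l * bordered_inverse m $$ (l, j))"
    unfolding index_mult_mat_sum[OF gram_carrier bordered_inverse_carrier i j] using i by simp
  also have "\<dots> = (if j < m then (\<Sum>l<m. t i l * gram_inv m $$ (l, j)) else 0)
      + (\<Sum>l<Suc m. t i l * border m l) * cnj (border m j) / schur m"
    using j by (simp add: bordered_inverse_def distrib_left sum.distrib sum_distrib_right
        sum_divide_distrib mult.assoc del: sum.lessThan_Suc) (simp add: lessThan_Suc)
  also have "\<dots> = 1\<^sub>m (Suc m) $$ (i, j)"
  proof (cases "i < m")
    case True
    then show ?thesis using i j by (simp add: sum_gram_border sum_gram_gram_inv del: sum.lessThan_Suc)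
  next
    case False
    then have "i = m" using i by simp
    moreover have "(\<Sum>l<Suc m. t m l * border m l) = schur m" by (simp add: schur_def)
    moreover have "border m j = 1" if "\<not> j < m" using that by (simp add: border_def)
    ultimately show ?thesis using j s
      by (cases "j < m") (simp_all add: cnj_border del: sum.lessThan_Suc)
  qed
  finally show "(gram (Suc m) * bordered_inverse m) $$ (i, j) = 1\<^sub>m (Suc m) $$ (i, j)" .
qed (simp_all add: bordered_inverse_def)

lemma gram_inv_Suc: "gram_inv (Suc m) = bordered_inverse m"
proof -
  have "gram_inv (Suc m) = gram_inv (Suc m) * (gram (Suc m) * bordered_inverse m)"
    by (simp add: gram_mult_bordered_inverse right_mult_one_mat[OF gram_inv_carrier])
  also have "\<dots> = bordered_inverse m"
    by (simp add: assoc_mult_mat[symmetric, OF gram_inv_carrier gram_carrier bordered_inverse_carrier]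
        gram_inv_mult_gram left_mult_one_mat[OF bordered_inverse_carrier])
  finally show ?thesis .
qed

definition normalized_border :: "nat \<Rightarrow> complex vec" where
  "normalized_border m = vec (Suc m) (\<lambda>i. border m i / of_real (sqrt (Re (schur m))))"

lemma normalized_border_carrier [simp]: "normalized_border m \<in> carrier_vec (Suc m)"
  by (simp add: normalized_border_def)

lemma normalized_border_last_nonzero: "normalized_border m $ m \<noteq> 0"
  using schur_pos[of m] by (simp add: normalized_border_def border_def less_complex_def)

lemma normalized_border_outer:
  assumes "i < Suc m" "j < Suc m"
  shows "normalized_border m $ i * cnj (normalized_border m $ j) = border m i * cnj (border m j) / schur m"
proof -
  have "schur m = (of_real (sqrt (Re (schur m))))\<^sup>2"
    using schur_pos[of m] by (simp add: less_complex_def complex_eq_iff)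
  then show ?thesis
    using assms by (simp add: normalized_border_def) (simp add: power2_eq_square)
qed

lemma sandwich_gram_inv_Suc_diff:
  fixes n :: nat and c :: "nat \<Rightarrow> complex vec"
  defines "V \<equiv> \<lambda>k. mat_of_cols n (map c [0..<k])"
  shows "V (Suc m) * gram_inv (Suc m) * mat_adjoint (V (Suc m)) - V m * gram_inv m * mat_adjoint (V m)
    = outer_mat (V (Suc m) *\<^sub>v normalized_border m)"
    (is "?X (Suc m) - ?X m = outer_mat ?w")
proof -
  have V: "V k \<in> carrier_mat n k" for k
    using mat_of_cols_carrier(1)[of n "map c [0..<k]"] by (simp add: V_def)
  have X: "?X k \<in> carrier_mat n n" for k
    using carrier_matD[OF V[of k]] by (intro carrier_matI) simp_all
  have entry: "(?X (Suc m)) $$ (p, q) = (?X m) $$ (p, q) + ?w $ p * cnj (?w $ q)"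
    if p: "p < n" and q: "q < n" for p q
  proof -
    have "(?X (Suc m)) $$ (p, q)
        = (\<Sum>j<Suc m. \<Sum>i<Suc m. c i $ p * (if i < m \<and> j < m then gram_inv m $$ (i, j) else 0) * cnj (c j $ q))
          + (\<Sum>j<Suc m. \<Sum>i<Suc m. c i $ p * (border m i * cnj (border m j) / schur m) * cnj (c j $ q))"
      unfolding gram_inv_Suc index_sandwich_adjoint[OF V bordered_inverse_carrier p q] sum.distrib[symmetric]
      using p q by (intro sum.cong refl) (simp add: V_def bordered_inverse_def algebra_simps del: upt_Suc)
    also have "(\<Sum>j<Suc m. \<Sum>i<Suc m. c i $ p * (if i < m \<and> j < m then gram_inv m $$ (i, j) else 0) * cnj (c j $ q))
        = (?X m) $$ (p, q)"
      unfolding index_sandwich_adjoint[OF V gram_inv_carrier p q] using p q by (simp add: V_def)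
    also have "(\<Sum>j<Suc m. \<Sum>i<Suc m. c i $ p * (border m i * cnj (border m j) / schur m) * cnj (c j $ q))
        = (\<Sum>j<Suc m. \<Sum>i<Suc m. (c i $ p * normalized_border m $ i) * cnj (c j $ q * normalized_border m $ j))"
      by (intro sum.cong refl) (simp add: normalized_border_outer[symmetric] mult_ac)
    also have "\<dots> = (\<Sum>i<Suc m. c i $ p * normalized_border m $ i) * cnj (\<Sum>j<Suc m. c j $ q * normalized_border m $ j)"
      unfolding cnj_sum sum_product by (rule sum.swap)
    also have "\<dots> = ?w $ p * cnj (?w $ q)"
      unfolding index_mult_mat_vec_sum[OF V normalized_border_carrier p]
        index_mult_mat_vec_sum[OF V normalized_border_carrier q]
      using p q by (simp add: V_def del: upt_Suc)
    finally show ?thesis .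
  qed
  show ?thesis
  proof (rule eq_matI)
    fix p q assume "p < dim_row (outer_mat ?w)" "q < dim_col (outer_mat ?w)"
    then have p: "p < n" and q: "q < n" using carrier_matD[OF V[of "Suc m"]] by simp_all
    have "(?X (Suc m) - ?X m) $$ (p, q) = ?X (Suc m) $$ (p, q) - ?X m $$ (p, q)"
      using p q X[of m] by (intro index_minus_mat(1)) auto
    also have "\<dots> = outer_mat ?w $$ (p, q)"
      using entry[OF p q] p q carrier_matD[OF V[of "Suc m"]] by simp
    finally show "(?X (Suc m) - ?X m) $$ (p, q) = outer_mat ?w $$ (p, q)" .
  qed (use carrier_matD[OF X[of m]] carrier_matD[OF X[of "Suc m"]] carrier_matD[OF V[of "Suc m"]] in simp_all)
qed

end

section \<open>The rank-one update of \<open>X\<^sub>k\<close>\<close>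

definition resolvent_col :: "nat \<Rightarrow> complex mat \<Rightarrow> complex mat \<Rightarrow> (nat \<Rightarrow> complex) \<Rightarrow> nat \<Rightarrow> complex vec" where
  "resolvent_col n A C \<alpha> i = minv (- mat_adjoint A + \<alpha> (Suc i) \<cdot>\<^sub>m 1\<^sub>m n) *\<^sub>v col (mat_adjoint C) 0"

definition Tkernel :: "nat \<Rightarrow> complex mat \<Rightarrow> complex mat \<Rightarrow> complex mat \<Rightarrow> (nat \<Rightarrow> complex) \<Rightarrow> nat \<Rightarrow> nat \<Rightarrow> complex" where
  "Tkernel n A C F \<alpha> = cauchy_like (\<lambda>i. \<alpha> (Suc i)) (\<lambda>i j. 1 + gram_kernel n F (resolvent_col n A C \<alpha>) i j)"

lemma Vmat_eq_mat_of_cols: "Vmat n A C \<alpha> k = mat_of_cols n (map (resolvent_col n A C \<alpha>) [0..<k])"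
  by (simp add: Vmat_def resolvent_col_def[abs_def])

lemma pd_kernel_Tkernel:
  assumes "hermitian_mat n F" "psd_mat n F" "inj_on \<alpha> {1..}" "\<And>j. j \<ge> 1 \<Longrightarrow> Re (\<alpha> j) > 0"
  shows "pd_kernel (Tkernel n A C F \<alpha>)"
  unfolding Tkernel_def
proof (rule pd_kernel_cauchy_like)
  show "inj (\<lambda>i. \<alpha> (Suc i))" using assms(3) by (auto simp: inj_def inj_on_def)
  show "Re (\<alpha> (Suc i)) > 0" for i using assms(4) by simp
  show "gram_kernel n F (resolvent_col n A C \<alpha>) j i = cnj (gram_kernel n F (resolvent_col n A C \<alpha>) i j)" for i j
    by (rule gram_kernel_hermitian[OF assms(1)])
  show "0 \<le> quad_form {0..<m} (gram_kernel n F (resolvent_col n A C \<alpha>)) w" for m w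
    by (rule quad_form_gram_kernel_nonneg[OF assms(2)])
qed

lemma (in pd_kernel) Tmat_eq_gram:
  assumes "t = Tkernel n A C F \<alpha>" "F \<in> carrier_mat n n"
  shows "Tmat n A C F \<alpha> k = gram k"
proof (rule eq_matI)
  fix i j assume "i < dim_row (gram k)" "j < dim_col (gram k)"
  then show "Tmat n A C F \<alpha> k $$ (i, j) = gram k $$ (i, j)"
    by (simp add: Tmat_def Let_def Vmat_eq_mat_of_cols index_adjoint_gram_kernel[OF assms(2)] del: index_mult_mat)
      (simp add: assms(1) Tkernel_def cauchy_like_def)
qed (simp_all add: Tmat_def Let_def)

lemma (in pd_kernel) Xmat_eq_sandwich:
  assumes "t = Tkernel n A C F \<alpha>" "F \<in> carrier_mat n n"
  shows "Xmat n A C F \<alpha> k = Vmat n A C \<alpha> k * gram_inv k * mat_adjoint (Vmat n A C \<alpha> k)"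
proof (cases "k = 0")
  case True
  have V: "Vmat n A C \<alpha> 0 \<in> carrier_mat n 0"
    using mat_of_cols_carrier(1)[of n "[]"] by (simp add: Vmat_eq_mat_of_cols)
  have "Vmat n A C \<alpha> 0 * gram_inv 0 * mat_adjoint (Vmat n A C \<alpha> 0) = 0\<^sub>m n n"
  proof (rule eq_matI)
    fix p q assume "p < dim_row (0\<^sub>m n n :: complex mat)" "q < dim_col (0\<^sub>m n n :: complex mat)"
    then show "(Vmat n A C \<alpha> 0 * gram_inv 0 * mat_adjoint (Vmat n A C \<alpha> 0)) $$ (p, q) = 0\<^sub>m n n $$ (p, q)"
      using index_sandwich_adjoint[OF V gram_inv_carrier, of p q] by simp
  qed (use carrier_matD[OF V] in simp_all)
  then show ?thesis using True by (simp add: Xmat_def)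
qed (simp add: Xmat_def Let_def assms Tmat_eq_gram)

theorem theorem6p2:
  fixes n :: nat and A C F :: "complex mat" and \<alpha> :: "nat \<Rightarrow> complex"
  assumes A: "A \<in> carrier_mat n n"
    and C: "C \<in> carrier_mat 1 n"
    and F: "hermitian_mat n F"
    and Fpsd: "psd_mat n F"
    and dist: "inj_on \<alpha> {1..}"
    and re: "\<And>j. j \<ge> 1 \<Longrightarrow> Re (\<alpha> j) > 0"
    and nonsing: "\<And>j. j \<ge> 1 \<Longrightarrow> det (- mat_adjoint A + \<alpha> j \<cdot>\<^sub>m 1\<^sub>m n) \<noteq> 0"
    and k: "k \<ge> 1"
  shows "(\<exists>l \<in> carrier_vec k. l $ (k - 1) \<noteq> 0 \<and>
            Xmat n A C F \<alpha> k - Xmat n A C F \<alpha> (k - 1)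
              = Vmat n A C \<alpha> k * (mat_of_cols k [l] * mat_adjoint (mat_of_cols k [l]))
                * mat_adjoint (Vmat n A C \<alpha> k))
       \<and> vec_space.rank n (Xmat n A C F \<alpha> k - Xmat n A C F \<alpha> (k - 1)) \<le> 1
       \<and> (vec_space.rank n (Vmat n A C \<alpha> k) = k \<longrightarrow>
            vec_space.rank n (Xmat n A C F \<alpha> k - Xmat n A C F \<alpha> (k - 1)) = 1)
       \<and> psd_mat n (Xmat n A C F \<alpha> k - Xmat n A C F \<alpha> (k - 1))"
proof -
  have Fc: "F \<in> carrier_mat n n" using F by (simp add: hermitian_mat_def)
  interpret pd_kernel "Tkernel n A C F \<alpha>" using pd_kernel_Tkernel[OF F Fpsd dist re] .
  obtain m where m: "k = Suc m" using k by (cases k) auto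
  let ?V = "Vmat n A C \<alpha> k" and ?l = "normalized_border m"
  have V: "?V \<in> carrier_mat n k"
    using mat_of_cols_carrier(1)[of n "map (resolvent_col n A C \<alpha>) [0..<k]"] by (simp add: Vmat_eq_mat_of_cols)
  have l: "?l \<in> carrier_vec k" using m by simp
  have w: "?V *\<^sub>v ?l \<in> carrier_vec n" using mult_mat_vec_carrier[OF V l] .
  have diff: "Xmat n A C F \<alpha> k - Xmat n A C F \<alpha> (k - 1) = outer_mat (?V *\<^sub>v ?l)"
    using sandwich_gram_inv_Suc_diff[of n "resolvent_col n A C \<alpha>" m]
    unfolding Xmat_eq_sandwich[OF refl Fc] Vmat_eq_mat_of_cols m by simp
  have "?V *\<^sub>v ?l \<noteq> 0\<^sub>v n" if "vec_space.rank n ?V = k"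
    using vec_space.full_rank_mult_vec_eq_0[OF V that l] normalized_border_last_nonzero[of m] m by auto
  then show ?thesis
    unfolding diff
    using sandwich_outer_mat[OF V l] normalized_border_last_nonzero[of m] m l
      rank_outer_mat_le_1[OF w] rank_outer_mat[OF w] psd_outer_mat[OF w]
    by auto
qed

end
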